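(* There is an absolute constant $c>0$ such that for all $\sigma\in(\frac12,1)$ and all real $t$, \[\left|\frac{\hat{f}_\sigma(1-\sigma + it)}{\hat{f}_\sigma(1-\sigma)}\right| \leq \begin{cases} \left(1 + \dfrac{ct^2}{(1-\sigma)^2}\right)^{-1/2}, & |t|< \frac{1}{4},\\[2mm] 1-c, & |t| \geq \frac{1}{4}.\end{cases}\]
   Context: For $\sigma \in (\frac12,1)$, $c_\sigma>0$ and $f_\sigma:(0,\infty)\to(0,1)$ are determined by requiring that $f_\sigma$ be the unique continuous $(0,1)$-valued solution of $\frac{f_\sigma(x)}{(1-f_\sigma(x)^2)^2} = (c_\sigma/x)^\sigma$ and that $\int_0^\infty \frac{f_\sigma(x)^2}{1-f_\sigma(x)^2}dx = 1$. Its Mellin transform is $\hat{f}_\sigma(s) = \int_0^\infty f_\sigma(x)x^{s-1}dx$, which converges absolutely for $0<\Re(s)<\sigma$. *)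

theory Defs
  imports "HOL-Analysis.Analysis"
begin

definition f_aux :: "real \<Rightarrow> real \<Rightarrow> real \<Rightarrow> real" where
  "f_aux \<sigma> c x = (THE y. 0 < y \<and> y < 1 \<and> y / (1 - y\<^sup>2)\<^sup>2 = (c / x) powr \<sigma>)"

definition c_sigma :: "real \<Rightarrow> real" where
  "c_sigma \<sigma> = (THE c. 0 < c \<and>
      ((\<lambda>x. (f_aux \<sigma> c x)\<^sup>2 / (1 - (f_aux \<sigma> c x)\<^sup>2)) has_integral 1) {0<..})"

definition f_sigma :: "real \<Rightarrow> real \<Rightarrow> real" where
  "f_sigma \<sigma> x = f_aux \<sigma> (c_sigma \<sigma>) x"

definition mellin_f :: "real \<Rightarrow> complex \<Rightarrow> complex" where
  "mellin_f \<sigma> s = (LINT x:{0<..}|lborel. complex_of_real (f_sigma \<sigma> x) * complex_of_real x powr (s - 1))"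

end

theory Submission
  imports Defs
begin

text \<open>A nonnegative nonincreasing g tending to 0 is the superposition over levels l > 0 of the
  indicators of its superlevel sets, which are intervals (0,y] up to one endpoint. Such an indicator
  has Mellin transform y^s/s, whose modulus is Re s/|s| times the positive transform y^(Re s)/Re s
  at Re s; integrating over the levels gives |Mg(s)| \<le> (Re s/|s|) Mg(Re s). The function f_\<sigma> is
  nonincreasing and tends to 0 once c_\<sigma> > 0, which follows from the normalisation because the
  normalising integral scales linearly in c. At s = 1 - \<sigma> + it the ratio is thus at most
  (1 - \<sigma>)/sqrt((1 - \<sigma>)^2 + t^2), which lies below both branches of the bound for c = 1/10.\<close>

section \<open>Mellin transforms of nonincreasing functions\<close>

definition mellin :: "(real \<Rightarrow> real) \<Rightarrow> complex \<Rightarrow> complex" where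
  "mellin g s = (LINT x:{0<..}|lborel. complex_of_real (g x) * complex_of_real x powr (s - 1))"

definition superlevel :: "(real \<Rightarrow> real) \<Rightarrow> real \<Rightarrow> real set" where
  "superlevel g l = {x. 0 < x \<and> l < g x}"

definition subgraph :: "(real \<Rightarrow> real) \<Rightarrow> (real \<times> real) set" where
  "subgraph g = {(x, l). 0 < x \<and> 0 < l \<and> l < g x}"

lemma indicator_subgraph:
  "indicator (subgraph g) (x, l) = (indicator {0<..} l * indicator (superlevel g l) x :: real)"
  "indicator (subgraph g) (x, l) = (indicator {0<..} x * indicator {0<..<g x} l :: real)"
  by (auto simp: subgraph_def superlevel_def indicator_def)

lemma norm_mellin_integrand:
  "0 < x \<Longrightarrow> 0 \<le> g x \<Longrightarrow>
     norm (complex_of_real (g x) * complex_of_real x powr (s - 1)) = g x * x powr (Re s - 1)"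
  by (simp add: norm_mult norm_powr_real_powr)

lemma borel_measurable_powr_Ioi:
  "(\<lambda>x. indicator {0<..} x *\<^sub>R complex_of_real x powr w) \<in> borel_measurable borel"
  by (auto intro!: borel_measurable_continuous_on_indicator continuous_intros simp: complex_nonpos_Reals_iff)

lemma borel_measurable_antimono_on_Ioi:
  fixes g :: "real \<Rightarrow> real"
  assumes "antimono_on {0<..} g"
  shows "g \<in> borel_measurable (restrict_space borel {0<..})"
proof -
  have "mono_on {0<..} (\<lambda>x. - g x)"
    by (intro monotone_onI) (simp add: monotone_onD[OF assms])
  then have "(\<lambda>x. - (- g x)) \<in> borel_measurable (restrict_space borel {0<..})"
    by (intro borel_measurable_uminus borel_measurable_mono_on_fnc)
  then show ?thesis by simp
qed

lemma sets_subgraph: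
  assumes "g \<in> borel_measurable (restrict_space borel {0<..})"
  shows "subgraph g \<in> sets (lborel \<Otimes>\<^sub>M lborel)"
proof -
  define g0 where "g0 x = (if 0 < x then g x else 0)" for x
  have [measurable]: "g0 \<in> borel_measurable borel"
    using assms unfolding g0_def by (subst (asm) measurable_restrict_space_iff) auto
  have "Measurable.pred (lborel \<Otimes>\<^sub>M lborel) (\<lambda>q. 0 < fst q \<and> 0 < snd q \<and> snd q < g0 (fst q))"
    by measurable
  moreover have "subgraph g = {q. 0 < fst q \<and> 0 < snd q \<and> snd q < g0 (fst q)}"
    by (auto simp: subgraph_def g0_def)
  ultimately show ?thesis
    unfolding pred_def by (simp add: space_pair_measure)
qed

lemma integrable_subgraph_powr:
  fixes g :: "real \<Rightarrow> real"
  assumes meas: "g \<in> borel_measurable (restrict_space borel {0<..})"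
    and nonneg: "\<And>x. 0 < x \<Longrightarrow> 0 \<le> g x"
    and int: "set_integrable lborel {0<..} (\<lambda>x. g x * x powr (Re w - 1))"
  shows "integrable (lborel \<Otimes>\<^sub>M lborel)
    (\<lambda>(x, l). indicator (subgraph g) (x, l) *\<^sub>R complex_of_real x powr (w - 1))"
    (is "integrable _ (case_prod ?H)")
proof -
  have [measurable]: "subgraph g \<in> sets (lborel \<Otimes>\<^sub>M lborel)"
    by (rule sets_subgraph[OF meas])
  have [measurable]: "(\<lambda>x. indicator {0<..} x *\<^sub>R complex_of_real x powr (w - 1)) \<in> borel_measurable lborel"
    using borel_measurable_powr_Ioi by simp
  have "(\<lambda>q. indicator (subgraph g) q *\<^sub>R (indicator {0<..} (fst q) *\<^sub>R complex_of_real (fst q) powr (w - 1)))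
      \<in> borel_measurable (lborel \<Otimes>\<^sub>M lborel)"
    by measurable
  moreover have "indicator (subgraph g) q *\<^sub>R (indicator {0<..} (fst q) *\<^sub>R complex_of_real (fst q) powr (w - 1))
      = case_prod ?H q" for q
    by (auto simp: subgraph_def indicator_def split: prod.split)
  ultimately have Hm: "case_prod ?H \<in> borel_measurable (lborel \<Otimes>\<^sub>M lborel)"
    by simp
  have slice: "(\<integral>\<^sup>+l. ennreal (norm (?H x l)) \<partial>lborel)
      = ennreal (norm (indicator {0<..} x *\<^sub>R (g x * x powr (Re w - 1))))" for x
  proof (cases "0 < x")
    case True
    have "(\<integral>\<^sup>+l. ennreal (norm (?H x l)) \<partial>lborel)
        = (\<integral>\<^sup>+l. ennreal (x powr (Re w - 1)) * indicator {0<..<g x} l \<partial>lborel)"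
      using True by (intro nn_integral_cong) (auto simp: subgraph_def norm_powr_real_powr indicator_def)
    also have "\<dots> = ennreal (x powr (Re w - 1)) * ennreal (g x)"
      using nonneg[OF True] by (simp add: nn_integral_cmult_indicator)
    finally show ?thesis
      using True nonneg[OF True] by (simp add: ennreal_mult' mult.commute)
  qed (simp add: indicator_subgraph(2))
  have "(\<integral>\<^sup>+q. ennreal (norm (case_prod ?H q)) \<partial>(lborel \<Otimes>\<^sub>M lborel))
      = (\<integral>\<^sup>+x. \<integral>\<^sup>+l. ennreal (norm (?H x l)) \<partial>lborel \<partial>lborel)"
    by (subst lborel.nn_integral_fst[symmetric]) (use Hm in auto)
  also have "\<dots> = (\<integral>\<^sup>+x. ennreal (norm (indicator {0<..} x *\<^sub>R (g x * x powr (Re w - 1)))) \<partial>lborel)"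
    by (simp only: slice)
  also have "\<dots> < \<infinity>"
    using int unfolding set_integrable_def integrable_iff_bounded by simp
  finally show ?thesis
    using Hm by (simp add: integrable_iff_bounded)
qed

lemma mellin_layer_cake:
  fixes g :: "real \<Rightarrow> real"
  assumes meas: "g \<in> borel_measurable (restrict_space borel {0<..})"
    and nonneg: "\<And>x. 0 < x \<Longrightarrow> 0 \<le> g x"
    and int: "set_integrable lborel {0<..} (\<lambda>x. g x * x powr (Re w - 1))"
  shows "set_integrable lborel {0<..} (\<lambda>l. LINT x:superlevel g l|lborel. complex_of_real x powr (w - 1))"
    and "mellin g w = (LINT l:{0<..}|lborel. LINT x:superlevel g l|lborel. complex_of_real x powr (w - 1))"
proof -
  define H where "H x l = indicator (subgraph g) (x, l) *\<^sub>R complex_of_real x powr (w - 1)" for x l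
  have int2: "integrable (lborel \<Otimes>\<^sub>M lborel) (case_prod H)"
    unfolding H_def by (rule integrable_subgraph_powr[OF meas nonneg int])
  have by_level: "H x l = indicator {0<..} l *\<^sub>R (indicator (superlevel g l) x *\<^sub>R complex_of_real x powr (w - 1))"
    for x l
    by (simp add: H_def indicator_subgraph(1))
  show "set_integrable lborel {0<..} (\<lambda>l. LINT x:superlevel g l|lborel. complex_of_real x powr (w - 1))"
    using lborel_pair.integrable_snd[OF int2]
    unfolding by_level integral_scaleR_right set_integrable_def set_lebesgue_integral_def .
  have by_point: "(LINT l|lborel. H x l) = indicator {0<..} x *\<^sub>R (complex_of_real (g x) * complex_of_real x powr (w - 1))"
    for x
  proof (cases "0 < x")
    case True
    have "(LINT l|lborel. H x l) = (LINT l|lborel. indicator {0<..<g x} l *\<^sub>R complex_of_real x powr (w - 1))"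
      using True by (simp add: H_def indicator_subgraph(2))
    also have "\<dots> = indicator {0<..} x *\<^sub>R (complex_of_real (g x) * complex_of_real x powr (w - 1))"
      using True nonneg[OF True] by (simp add: scaleR_conv_of_real)
    finally show ?thesis .
  qed (simp add: H_def indicator_subgraph(2))
  have "mellin g w = (LINT x|lborel. LINT l|lborel. H x l)"
    by (simp add: by_point mellin_def set_lebesgue_integral_def)
  also have "\<dots> = (LINT l|lborel. LINT x|lborel. H x l)"
    by (rule lborel_pair.Fubini_integral[OF int2, symmetric])
  also have "\<dots> = (LINT l:{0<..}|lborel. LINT x:superlevel g l|lborel. complex_of_real x powr (w - 1))"
    unfolding by_level integral_scaleR_right set_lebesgue_integral_def ..
  finally show "mellin g w = \<dots>" .
qed

lemma set_integrable_powr_Ioc: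
  assumes w: "0 < Re w" and y: "0 \<le> y"
  shows "set_integrable lborel {0<..y} (\<lambda>x. complex_of_real x powr (w - 1))"
  unfolding set_integrable_def
proof (rule Bochner_Integration.integrable_bound [OF _ _ AE_I2])
  have "integrable lebesgue (\<lambda>x. indicat_real {0<..y} x *\<^sub>R x powr (Re w - 1))"
    using y w
    by (intro nonnegative_absolutely_integrable_1 [unfolded set_integrable_def] integrable_on_powr_from_0') auto
  then show "integrable lborel (\<lambda>x. indicat_real {0<..y} x *\<^sub>R x powr (Re w - 1))"
    by (subst integrable_completion[symmetric]) auto
  show "(\<lambda>x. indicat_real {0<..y} x *\<^sub>R complex_of_real x powr (w - 1)) \<in> borel_measurable lborel"
    by (auto intro!: borel_measurable_continuous_on_indicator continuous_intros simp: complex_nonpos_Reals_iff)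
  fix x :: real
  show "norm (indicat_real {0<..y} x *\<^sub>R complex_of_real x powr (w - 1))
      \<le> norm (indicat_real {0<..y} x *\<^sub>R x powr (Re w - 1))"
    by (auto simp: norm_powr_real_powr indicator_def)
qed

lemma tendsto_powr_at_right_0:
  assumes "0 < Re w"
  shows "((\<lambda>x. complex_of_real x powr w) \<longlongrightarrow> 0) (at_right 0)"
proof (rule tendsto_norm_zero_cancel)
  have "((\<lambda>x. x powr Re w) \<longlongrightarrow> 0 powr Re w) (at_right 0)"
    using assms by (intro tendsto_intros) (auto intro!: eventually_mono[OF eventually_at_right_less])
  then have "((\<lambda>x. x powr Re w) \<longlongrightarrow> 0) (at_right 0)"
    by simp
  then show "((\<lambda>x. norm (complex_of_real x powr w)) \<longlongrightarrow> 0) (at_right 0)"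
    by (rule Lim_transform_eventually)
      (auto simp: norm_powr_real_powr intro!: eventually_mono[OF eventually_at_right_less])
qed

lemma set_integral_powr_Ioc:
  fixes w :: complex and y :: real
  assumes w: "0 < Re w" and y: "0 < y"
  shows "(LINT x:{0<..y}|lborel. complex_of_real x powr (w - 1)) = complex_of_real y powr w / w"
proof -
  have w0: "w \<noteq> 0"
    using w by auto
  have "(LBINT x=ereal 0..ereal y. complex_of_real x powr (w - 1)) = complex_of_real y powr w / w - 0"
  proof (rule interval_integral_FTC_integrable[where F="\<lambda>x. complex_of_real x powr w / w"])
    fix x assume "ereal 0 < ereal x" "ereal x < ereal y"
    then have x: "0 < x" by simp
    have "((\<lambda>z. z powr w / w) has_field_derivative (w * (of_real x) powr (w - 1) / w)) (at (complex_of_real x))"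
      using x by (auto intro!: derivative_eq_intros simp: complex_nonpos_Reals_iff)
    then show "((\<lambda>x. complex_of_real x powr w / w) has_vector_derivative complex_of_real x powr (w - 1)) (at x)"
      using w0 by (auto dest: has_vector_derivative_real_field)
    show "isCont (\<lambda>x. complex_of_real x powr (w - 1)) x"
      using x by (auto intro!: continuous_intros simp: complex_nonpos_Reals_iff)
  next
    show "set_integrable lborel (einterval (ereal 0) (ereal y)) (\<lambda>x. complex_of_real x powr (w - 1))"
      using set_integrable_powr_Ioc[OF w less_imp_le[OF y]] by (rule set_integrable_subset) auto
    show "(((\<lambda>x. complex_of_real x powr w / w) \<circ> real_of_ereal) \<longlongrightarrow> 0) (at_right (ereal 0))"
      unfolding ereal_tendsto_simps1 using tendsto_divide[OF tendsto_powr_at_right_0[OF w] tendsto_const, of w] w0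
      by simp
    show "(((\<lambda>x. complex_of_real x powr w / w) \<circ> real_of_ereal) \<longlongrightarrow> complex_of_real y powr w / w) (at_left (ereal y))"
      unfolding ereal_tendsto_simps1 using y w0
      by (intro tendsto_intros continuous_imp_tendsto) (auto intro!: continuous_intros simp: complex_nonpos_Reals_iff)
  qed (use y in simp)
  then show ?thesis
    using y by (simp add: interval_integral_Ioc)
qed

lemma norm_set_integral_powr_Ioc:
  fixes s :: complex and y :: real
  assumes s: "0 < Re s" and y: "0 \<le> y"
  shows "norm (LINT x:{0<..y}|lborel. complex_of_real x powr (s - 1))
    = Re s / norm s * Re (LINT x:{0<..y}|lborel. complex_of_real x powr (complex_of_real (Re s) - 1))"
proof (cases "y = 0")
  case False
  with y have y: "0 < y" by simp
  have "norm (LINT x:{0<..y}|lborel. complex_of_real x powr (s - 1)) = y powr Re s / norm s"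
    using s y by (simp add: set_integral_powr_Ioc norm_divide norm_powr_real_powr)
  also have "\<dots> = Re s / norm s * (y powr Re s / Re s)"
    using s by simp
  also have "y powr Re s / Re s = Re (LINT x:{0<..y}|lborel. complex_of_real x powr (complex_of_real (Re s) - 1))"
    using s y by (simp add: set_integral_powr_Ioc powr_of_real Re_divide_of_real)
  finally show ?thesis .
qed (simp add: set_lebesgue_integral_def)

lemma superlevel_antimono_cases:
  fixes g :: "real \<Rightarrow> real"
  assumes anti: "antimono_on {0<..} g" and lim: "(g \<longlongrightarrow> 0) at_top" and l: "0 < l"
  obtains y where "0 \<le> y" "superlevel g l = {0<..<y} \<or> superlevel g l = {0<..y}"
proof (cases "superlevel g l = {}")
  case True
  then show ?thesis using that[of 0] by simp
next
  case False
  let ?D = "superlevel g l"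
  obtain R where R: "\<And>x. R \<le> x \<Longrightarrow> g x < l"
    using order_tendstoD(2)[OF lim l] by (auto simp: eventually_at_top_linorder)
  have bdd: "bdd_above ?D"
    by (intro bdd_aboveI[of _ R]) (metis R less_asym linorder_not_le mem_Collect_eq superlevel_def)
  define y where "y = Sup ?D"
  have upper: "?D \<subseteq> {0<..y}"
    using cSup_upper[OF _ bdd] by (auto simp: y_def superlevel_def)
  have lower: "{0<..<y} \<subseteq> ?D"
  proof
    fix x assume x: "x \<in> {0<..<y}"
    then obtain d where "d \<in> ?D" "x < d"
      using less_cSup_iff[OF False bdd] by (auto simp: y_def)
    then show "x \<in> ?D"
      using x monotone_onD[OF anti, of x d] by (auto simp: superlevel_def)
  qed
  have "0 \<le> y" using False upper by auto
  moreover have "?D = {0<..<y} \<or> ?D = {0<..y}"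
  proof (cases "y \<in> ?D")
    case True
    then have "{0<..y} \<subseteq> ?D" using lower by (auto simp: less_le)
    then show ?thesis using upper by blast
  next
    case False
    then have "?D \<subseteq> {0<..<y}" using upper by (auto simp: less_le)
    then show ?thesis using lower by blast
  qed
  ultimately show ?thesis by (rule that)
qed

lemma set_integral_superlevel_antimono:
  fixes g :: "real \<Rightarrow> real"
  assumes anti: "antimono_on {0<..} g" and lim: "(g \<longlongrightarrow> 0) at_top" and l: "0 < l"
  obtains y where "0 \<le> y"
    "\<And>f :: real \<Rightarrow> complex. (LINT x:superlevel g l|lborel. f x) = (LINT x:{0<..y}|lborel. f x)"
proof -
  obtain y where y: "0 \<le> y" and D: "superlevel g l = {0<..<y} \<or> superlevel g l = {0<..y}"
    using superlevel_antimono_cases[OF anti lim l] .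
  have "(LINT x:{0<..<y}|lborel. f x) = (LINT x:{0<..y}|lborel. f x)" for f :: "real \<Rightarrow> complex"
  proof (cases "y = 0")
    case False
    then show ?thesis
      using y interval_integral_Ioo[of "ereal 0" "ereal y" f] interval_integral_Ioc[of 0 y f] by simp
  qed simp
  then show ?thesis using that y D by metis
qed

theorem norm_mellin_le_mellin_Re:
  fixes g :: "real \<Rightarrow> real" and s :: complex
  assumes anti: "antimono_on {0<..} g" and nonneg: "\<And>x. 0 < x \<Longrightarrow> 0 \<le> g x"
    and lim: "(g \<longlongrightarrow> 0) at_top" and s: "0 < Re s"
  shows "norm (mellin g s) \<le> Re s / norm s * norm (mellin g (Re s))"
proof (cases "set_integrable lborel {0<..} (\<lambda>x. complex_of_real (g x) * complex_of_real x powr (s - 1))")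
  case False
  then show ?thesis
    using s by (simp add: mellin_def set_lebesgue_integral_def set_integrable_def not_integrable_integral_eq)
next
  case True
  have meas: "g \<in> borel_measurable (restrict_space borel {0<..})"
    by (rule borel_measurable_antimono_on_Ioi[OF anti])
  define L where "L w l = (LINT x:superlevel g l|lborel. complex_of_real x powr (w - 1))" for w l
  have "set_integrable lborel {0<..} (\<lambda>x. norm (complex_of_real (g x) * complex_of_real x powr (s - 1)))"
    using True by (rule set_integrable_norm)
  moreover have "set_integrable lborel {0<..} (\<lambda>x. norm (complex_of_real (g x) * complex_of_real x powr (s - 1)))
      = set_integrable lborel {0<..} (\<lambda>x. g x * x powr (Re s - 1))"
    by (intro set_integrable_cong) (auto simp: norm_mellin_integrand nonneg)
  ultimately have int: "set_integrable lborel {0<..} (\<lambda>x. g x * x powr (Re s - 1))"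
    by simp
  note cake_s = mellin_layer_cake[OF meas nonneg int, folded L_def]
  note cake_Re = mellin_layer_cake[OF meas nonneg, of "of_real (Re s)", folded L_def, simplified, OF int]
  have layer: "norm (L s l) = Re s / norm s * Re (L (Re s) l)" if l: "0 < l" for l
  proof -
    obtain y where "0 \<le> y" "\<And>f :: real \<Rightarrow> complex. (LINT x:superlevel g l|lborel. f x) = (LINT x:{0<..y}|lborel. f x)"
      using set_integral_superlevel_antimono[OF anti lim l] by blast
    then show ?thesis
      using norm_set_integral_powr_Ioc[OF s] by (simp add: L_def)
  qed
  have "norm (mellin g s) = norm (LINT l:{0<..}|lborel. L s l)"
    using cake_s(2) by simp
  also have "\<dots> \<le> (LINT l:{0<..}|lborel. norm (L s l))"
    by (rule set_integral_norm_bound[OF cake_s(1)])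
  also have "\<dots> = (LINT l:{0<..}|lborel. Re s / norm s * Re (L (Re s) l))"
    by (rule set_lebesgue_integral_cong) (auto simp: layer)
  also have "\<dots> = Re s / norm s * Re (LINT l:{0<..}|lborel. L (Re s) l)"
    using integral_Re[OF cake_Re(1)[unfolded set_integrable_def]] by (simp add: set_lebesgue_integral_def)
  also have "\<dots> \<le> Re s / norm s * norm (mellin g (Re s))"
    unfolding cake_Re(2) using s by (intro mult_left_mono complex_Re_le_cmod) auto
  finally show ?thesis .
qed

section \<open>The profile f_aux\<close>

definition phi :: "real \<Rightarrow> real" where
  "phi y = y / (1 - y\<^sup>2)\<^sup>2"

lemma phi_strict_mono:
  assumes "0 < y" "y < z" "z < 1"
  shows "phi y < phi z"
proof -
  have "z\<^sup>2 < 1" and "y\<^sup>2 < z\<^sup>2"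
    using assms by (simp_all add: power_strict_mono abs_square_less_1)
  then have "(1 - z\<^sup>2)\<^sup>2 < (1 - y\<^sup>2)\<^sup>2"
    by (intro power_strict_mono) auto
  then show ?thesis
    unfolding phi_def using assms \<open>z\<^sup>2 < 1\<close> by (intro frac_less2) auto
qed

lemma le_phi:
  assumes "0 < y" "y < 1"
  shows "y \<le> phi y"
proof -
  have "0 < 1 - y\<^sup>2" "1 - y\<^sup>2 \<le> 1"
    using assms by (auto simp: abs_square_less_1)
  then have "(1 - y\<^sup>2)\<^sup>2 \<le> 1" "0 < (1 - y\<^sup>2)\<^sup>2"
    by (auto simp: power_le_one)
  then show ?thesis
    unfolding phi_def using assms by (simp add: le_divide_eq)
qed

lemma phi_surj:
  assumes v: "0 < v"
  shows "\<exists>y. 0 < y \<and> y < 1 \<and> phi y = v"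
proof -
  define t where "t = 1 / (2 * (v + 1))"
  have t: "0 < t" "t \<le> 1/2" using v by (auto simp: t_def field_simps)
  define b where "b = sqrt (1 - t)"
  have b2: "b\<^sup>2 = 1 - t" using t by (simp add: b_def)
  have "1/2 \<le> b"
    unfolding b_def using t by (intro real_le_rsqrt) (simp add: power2_eq_square)
  moreover have "b < 1"
    unfolding b_def using t by simp
  ultimately have b: "1/2 \<le> b" "b < 1" .
  have "v \<le> 2 * (v + 1)\<^sup>2"
    using v by (simp add: power2_eq_square algebra_simps)
  also have "\<dots> = (1/2) / t\<^sup>2"
    using v by (simp add: t_def field_simps power2_eq_square)
  also have "\<dots> \<le> b / t\<^sup>2"
    using b t by (intro divide_right_mono) auto
  also have "\<dots> = phi b"
    by (simp add: phi_def b2)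
  finally have "v \<le> phi b" .
  moreover have "continuous_on {0..b} phi"
  proof -
    have "(1 - y\<^sup>2)\<^sup>2 \<noteq> 0" if "y \<in> {0..b}" for y
      using that power_mono[of y b 2] b2 t by auto
    then show ?thesis unfolding phi_def by (intro continuous_intros) auto
  qed
  ultimately obtain y where y: "0 \<le> y" "y \<le> b" "phi y = v"
    using IVT'[of phi 0 v b] b v by (auto simp: phi_def)
  moreover have "y \<noteq> 0" using y v by (auto simp: phi_def)
  ultimately show ?thesis using b by (intro exI[of _ y]) auto
qed

lemma f_aux_spec:
  assumes "0 < c" "0 < x"
  shows "0 < f_aux \<sigma> c x" "f_aux \<sigma> c x < 1" "phi (f_aux \<sigma> c x) = (c / x) powr \<sigma>"
proof -
  have "\<exists>!y. 0 < y \<and> y < 1 \<and> phi y = (c / x) powr \<sigma>"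
  proof (rule ex_ex1I)
    show "\<exists>y. 0 < y \<and> y < 1 \<and> phi y = (c / x) powr \<sigma>"
      using assms by (intro phi_surj) simp
  next
    fix y z
    assume "0 < y \<and> y < 1 \<and> phi y = (c / x) powr \<sigma>" "0 < z \<and> z < 1 \<and> phi z = (c / x) powr \<sigma>"
    then show "y = z"
      using phi_strict_mono[of y z] phi_strict_mono[of z y] by (cases y z rule: linorder_cases) auto
  qed
  from theI'[OF this] show "0 < f_aux \<sigma> c x" "f_aux \<sigma> c x < 1" "phi (f_aux \<sigma> c x) = (c / x) powr \<sigma>"
    unfolding f_aux_def phi_def by auto
qed

lemma f_aux_scale: "c \<noteq> 0 \<Longrightarrow> f_aux \<sigma> c x = f_aux \<sigma> 1 (x / c)"
  by (simp add: f_aux_def)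

lemma f_aux_antimono:
  assumes c: "0 < c" and \<sigma>: "0 \<le> \<sigma>"
  shows "antimono_on {0<..} (f_aux \<sigma> c)"
proof (intro monotone_onI)
  fix x y :: real assume "x \<in> {0<..}" "y \<in> {0<..}" "x \<le> y"
  moreover have "(c / y) powr \<sigma> \<le> (c / x) powr \<sigma>"
    using c \<sigma> calculation by (intro powr_mono2 divide_left_mono) auto
  ultimately show "f_aux \<sigma> c y \<le> f_aux \<sigma> c x"
    using f_aux_spec[OF c, of x \<sigma>] f_aux_spec[OF c, of y \<sigma>] phi_strict_mono[of "f_aux \<sigma> c x" "f_aux \<sigma> c y"]
    by (cases "f_aux \<sigma> c y \<le> f_aux \<sigma> c x") auto
qed

lemma f_aux_tendsto_0:
  assumes c: "0 < c" and \<sigma>: "0 < \<sigma>"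
  shows "(f_aux \<sigma> c \<longlongrightarrow> 0) at_top"
proof (rule tendsto_sandwich)
  show "\<forall>\<^sub>F x in at_top. 0 \<le> f_aux \<sigma> c x"
    using eventually_gt_at_top[of 0] by eventually_elim (simp add: f_aux_spec[OF c] less_imp_le)
  show "\<forall>\<^sub>F x in at_top. f_aux \<sigma> c x \<le> (c / x) powr \<sigma>"
    using eventually_gt_at_top[of 0]
    by eventually_elim (metis f_aux_spec[OF c] le_phi)
  have "((\<lambda>x. c / x) \<longlongrightarrow> 0) at_top"
    by (rule tendsto_divide_0[OF tendsto_const filterlim_at_top_imp_at_infinity[OF filterlim_ident]])
  moreover have "\<forall>\<^sub>F x in at_top. 0 \<le> c / x"
    using eventually_ge_at_top[of "0::real"] by eventually_elim (use c in simp)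
  ultimately show "((\<lambda>x. (c / x) powr \<sigma>) \<longlongrightarrow> 0) at_top"
    using \<sigma> by (intro tendsto_zero_powrI tendsto_const) auto
qed simp

section \<open>Positivity of c_sigma\<close>

text \<open>The integrand of the normalisation in c_sigma for c = 1, extended by 0 to the whole line;
  for general c it is mass_density \<sigma> (x / c).\<close>
definition mass_density :: "real \<Rightarrow> real \<Rightarrow> real" where
  "mass_density \<sigma> x = (if 0 < x then (f_aux \<sigma> 1 x)\<^sup>2 / (1 - (f_aux \<sigma> 1 x)\<^sup>2) else 0)"

lemma mass_density_nonneg: "0 \<le> mass_density \<sigma> x"
  using f_aux_spec[of 1 x \<sigma>] by (simp add: mass_density_def abs_square_less_1 less_imp_le)

lemma borel_measurable_mass_density:
  assumes "0 \<le> \<sigma>"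
  shows "mass_density \<sigma> \<in> borel_measurable borel"
proof -
  have [measurable]: "f_aux \<sigma> 1 \<in> borel_measurable (restrict_space borel {0<..})"
    using borel_measurable_antimono_on_Ioi f_aux_antimono[OF _ assms] by simp
  have "(\<lambda>x. (f_aux \<sigma> 1 x)\<^sup>2 / (1 - (f_aux \<sigma> 1 x)\<^sup>2)) \<in> borel_measurable (restrict_space borel {0<..})"
    by measurable
  then show ?thesis
    unfolding mass_density_def by (subst (asm) measurable_restrict_space_iff) auto
qed

text \<open>With y = f_aux \<sigma> 1 x and d = 1 - y^2 \<in> (0,1], the density is y^2/d while phi y = y/d^2 = x^-\<sigma>.\<close>
lemma mass_density_le:
  assumes x: "0 < x"
  shows "mass_density \<sigma> x \<le> x powr (-\<sigma>/2)" "mass_density \<sigma> x \<le> x powr (-(2*\<sigma>))"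
proof -
  define y where "y = f_aux \<sigma> 1 x"
  define d where "d = 1 - y\<^sup>2"
  have "(1/x) powr \<sigma> = x powr (-\<sigma>)"
    using x by (simp add: powr_minus_divide powr_divide)
  then have y: "0 < y" "y < 1" "y / d\<^sup>2 = x powr (-\<sigma>)"
    using f_aux_spec[of 1 x \<sigma>] x by (auto simp: y_def d_def phi_def)
  have d: "0 < d" "d \<le> 1"
    using y by (auto simp: d_def abs_square_less_1)
  have density: "mass_density \<sigma> x = y\<^sup>2 / d"
    using x by (simp add: mass_density_def y_def d_def)
  have "(y\<^sup>2 / d)\<^sup>2 = y^4 / d\<^sup>2"
    by (simp add: power_divide flip: power_mult)
  also have "\<dots> \<le> y / d\<^sup>2"
  proof (rule divide_right_mono)
    show "y^4 \<le> y" using power_decreasing[of 1 4 y] y by simp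
  qed simp
  finally have "(mass_density \<sigma> x)\<^sup>2 \<le> x powr (-\<sigma>)"
    using density y by simp
  then have "mass_density \<sigma> x \<le> sqrt (x powr (-\<sigma>))"
    by (rule real_le_rsqrt)
  also have "\<dots> = x powr (-\<sigma>/2)"
    using x by (simp add: powr_half_sqrt[symmetric] powr_powr)
  finally show "mass_density \<sigma> x \<le> x powr (-\<sigma>/2)" .
  have "d^4 \<le> d"
    using power_decreasing[of 1 4 d] d by simp
  then have "y\<^sup>2 / d \<le> y\<^sup>2 / d^4"
    using d by (intro divide_left_mono) auto
  also have "\<dots> = (y / d\<^sup>2)\<^sup>2"
    by (simp add: power_divide flip: power_mult)
  also have "\<dots> = x powr (-(2*\<sigma>))"
    using x y by (simp add: power2_eq_square powr_add[symmetric])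
  finally show "mass_density \<sigma> x \<le> x powr (-(2*\<sigma>))"
    using density by simp
qed

lemma mass_density_ge:
  assumes x: "1 \<le> x" "x \<le> 2" and \<sigma>: "0 < \<sigma>" "\<sigma> < 1"
  shows "1/16 \<le> mass_density \<sigma> x"
proof -
  define y where "y = f_aux \<sigma> 1 x"
  have y: "0 < y" "y < 1" "phi y = (1/x) powr \<sigma>"
    using f_aux_spec[of 1 x \<sigma>] x by (auto simp: y_def)
  have "phi (1/4) < 1/2"
    by (simp add: phi_def power2_eq_square)
  also have "(1/2 :: real) = (1/2) powr 1" by simp
  also have "\<dots> \<le> (1/2) powr \<sigma>" using \<sigma> by (intro powr_mono') auto
  also have "\<dots> \<le> (1/x) powr \<sigma>" using x \<sigma> by (intro powr_mono2) (auto simp: field_simps)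
  also have "\<dots> = phi y" using y by simp
  finally have "1/4 \<le> y"
    using phi_strict_mono[of y "1/4"] y by fastforce
  then have "1/16 \<le> y\<^sup>2"
    using power_mono[of "1/4" y 2] by (simp add: power2_eq_square)
  also have "y\<^sup>2 \<le> y\<^sup>2 / (1 - y\<^sup>2)"
    using y by (simp add: le_divide_eq abs_square_less_1 mult_left_le)
  also have "\<dots> = mass_density \<sigma> x"
    using x by (simp add: mass_density_def y_def)
  finally show ?thesis .
qed

lemma integrable_mass_density:
  assumes \<sigma>: "1/2 < \<sigma>" "\<sigma> < 1"
  shows "integrable lborel (mass_density \<sigma>)"
proof (rule Bochner_Integration.integrable_bound [OF _ _ AE_I2])
  define b where "b x = indicator {0<..1} x *\<^sub>R x powr (-\<sigma>/2) + indicator {1..} x *\<^sub>R x powr (-(2*\<sigma>))"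
    for x :: real
  have "(\<lambda>x. x powr (-(2*\<sigma>))) integrable_on {1..}"
    using has_integral_powr_to_inf[of "-(2*\<sigma>)" 1] \<sigma> unfolding integrable_on_def by auto
  then have "integrable lebesgue b"
    unfolding b_def using \<sigma>
    by (intro Bochner_Integration.integrable_add nonnegative_absolutely_integrable_1[unfolded set_integrable_def]
        integrable_on_powr_from_0') auto
  moreover have "b \<in> borel_measurable borel"
    unfolding b_def by (auto intro!: borel_measurable_continuous_on_indicator continuous_intros)
  ultimately show "integrable lborel b"
    by (subst integrable_completion[symmetric]) auto
  show "mass_density \<sigma> \<in> borel_measurable lborel"
    using borel_measurable_mass_density \<sigma> by simp
  fix x :: real
  show "norm (mass_density \<sigma> x) \<le> norm (b x)"
  proof (cases "0 < x")
    case True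
    then show ?thesis
      using mass_density_le[OF True, of \<sigma>] mass_density_nonneg[of \<sigma> x]
      by (cases "x \<le> 1") (auto simp: b_def intro: add_increasing2)
  qed (simp add: mass_density_def)
qed

lemma integral_mass_density_pos:
  assumes \<sigma>: "1/2 < \<sigma>" "\<sigma> < 1"
  shows "0 < integral\<^sup>L lborel (mass_density \<sigma>)"
proof -
  have "(1/16 :: real) = (LINT x|lborel. indicator {1..2::real} x / 16)"
    by simp
  also have "\<dots> \<le> integral\<^sup>L lborel (mass_density \<sigma>)"
  proof (rule integral_mono)
    show "integrable lborel (\<lambda>x. indicator {1..2::real} x / (16::real))"
      by simp
    show "indicator {1..2} x / 16 \<le> mass_density \<sigma> x" for x
      using mass_density_ge[of x \<sigma>] mass_density_nonneg[of \<sigma> x] \<sigma> by (auto simp: indicator_def)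
  qed (rule integrable_mass_density[OF \<sigma>])
  finally show ?thesis by simp
qed

lemma has_integral_normalisation_iff:
  assumes \<sigma>: "1/2 < \<sigma>" "\<sigma> < 1" and c: "0 < c"
  shows "((\<lambda>x. (f_aux \<sigma> c x)\<^sup>2 / (1 - (f_aux \<sigma> c x)\<^sup>2)) has_integral J) {0<..}
    \<longleftrightarrow> J = c * integral\<^sup>L lborel (mass_density \<sigma>)"
proof -
  define h where "h x = mass_density \<sigma> (x / c)" for x
  have h_scaled: "h (c * x) = mass_density \<sigma> x" for x
    using c by (simp add: h_def)
  have "integrable lborel (\<lambda>x. h (c * x))"
    using integrable_mass_density[OF \<sigma>] by (simp add: h_scaled)
  then have "integrable lborel h"
    using lborel_integrable_real_affine_iff[of c h 0] c by simp
  moreover have "integral\<^sup>L lborel h = c * integral\<^sup>L lborel (mass_density \<sigma>)"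
    using lborel_integral_real_affine[of c h 0] c by (simp add: h_scaled)
  ultimately have h: "(h has_integral c * integral\<^sup>L lborel (mass_density \<sigma>)) UNIV"
    using has_integral_integral_lborel[of h] by simp
  have restrict: "(\<lambda>x. if x \<in> {0<..} then (f_aux \<sigma> c x)\<^sup>2 / (1 - (f_aux \<sigma> c x)\<^sup>2) else 0) = h"
    using c by (auto simp: fun_eq_iff h_def mass_density_def f_aux_scale[of c] zero_less_divide_iff)
  have "((\<lambda>x. (f_aux \<sigma> c x)\<^sup>2 / (1 - (f_aux \<sigma> c x)\<^sup>2)) has_integral J) {0<..}
      \<longleftrightarrow> ((\<lambda>x. if x \<in> {0<..} then (f_aux \<sigma> c x)\<^sup>2 / (1 - (f_aux \<sigma> c x)\<^sup>2) else 0) has_integral J) UNIV"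
    by (rule has_integral_restrict_UNIV[symmetric])
  also have "\<dots> \<longleftrightarrow> (h has_integral J) UNIV"
    unfolding restrict ..
  also have "\<dots> \<longleftrightarrow> J = c * integral\<^sup>L lborel (mass_density \<sigma>)"
    using h has_integral_unique[OF _ h] by blast
  finally show ?thesis .
qed

lemma c_sigma_pos:
  assumes \<sigma>: "1/2 < \<sigma>" "\<sigma> < 1"
  shows "0 < c_sigma \<sigma>"
proof -
  define I where "I = integral\<^sup>L lborel (mass_density \<sigma>)"
  have I: "0 < I"
    unfolding I_def by (rule integral_mass_density_pos[OF \<sigma>])
  have normalised_iff: "((\<lambda>x. (f_aux \<sigma> c x)\<^sup>2 / (1 - (f_aux \<sigma> c x)\<^sup>2)) has_integral 1) {0<..} \<longleftrightarrow> c = 1 / I"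
    if "0 < c" for c
  proof -
    have "((\<lambda>x. (f_aux \<sigma> c x)\<^sup>2 / (1 - (f_aux \<sigma> c x)\<^sup>2)) has_integral 1) {0<..} \<longleftrightarrow> 1 = c * I"
      unfolding I_def by (rule has_integral_normalisation_iff[OF \<sigma> that])
    also have "\<dots> \<longleftrightarrow> c = 1 / I"
      using I by (auto simp: field_simps)
    finally show ?thesis .
  qed
  have unique: "\<exists>!c. 0 < c \<and> ((\<lambda>x. (f_aux \<sigma> c x)\<^sup>2 / (1 - (f_aux \<sigma> c x)\<^sup>2)) has_integral 1) {0<..}"
    using I normalised_iff by (intro ex1I[of _ "1 / I"]) auto
  show ?thesis
    unfolding c_sigma_def using theI'[OF unique] by simp
qed



section \<open>The bound on the Mellin ratio\<close>

lemma norm_mellin_f_ratio_le: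
  assumes \<sigma>: "1/2 < \<sigma>" "\<sigma> < 1"
  shows "norm (mellin_f \<sigma> (complex_of_real (1 - \<sigma>) + \<i> * complex_of_real t) / mellin_f \<sigma> (complex_of_real (1 - \<sigma>)))
    \<le> (1 - \<sigma>) / sqrt ((1 - \<sigma>)\<^sup>2 + t\<^sup>2)"
proof -
  define s where "s = complex_of_real (1 - \<sigma>) + \<i> * complex_of_real t"
  have s: "Re s = 1 - \<sigma>" "norm s = sqrt ((1 - \<sigma>)\<^sup>2 + t\<^sup>2)"
    by (simp_all add: s_def cmod_def)
  have c: "0 < c_sigma \<sigma>"
    by (rule c_sigma_pos[OF \<sigma>])
  have mellin_f_eq: "mellin_f \<sigma> = mellin (f_sigma \<sigma>)"
    by (simp add: fun_eq_iff mellin_f_def mellin_def)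
  have "norm (mellin_f \<sigma> s) \<le> Re s / norm s * norm (mellin_f \<sigma> (Re s))"
    unfolding mellin_f_eq f_sigma_def[abs_def]
  proof (rule norm_mellin_le_mellin_Re)
    show "antimono_on {0<..} (f_aux \<sigma> (c_sigma \<sigma>))"
      using \<sigma> by (intro f_aux_antimono c) simp
    show "0 \<le> f_aux \<sigma> (c_sigma \<sigma>) x" if "0 < x" for x
      using f_aux_spec(1)[OF c that, of \<sigma>] by simp
    show "(f_aux \<sigma> (c_sigma \<sigma>) \<longlongrightarrow> 0) at_top"
      using \<sigma> by (intro f_aux_tendsto_0 c) simp
    show "0 < Re s"
      using \<sigma> s(1) by simp
  qed
  then have "norm (mellin_f \<sigma> s / mellin_f \<sigma> (Re s)) \<le> Re s / norm s"
    using \<sigma> s(1) by (cases "mellin_f \<sigma> (Re s) = 0") (simp_all add: norm_divide divide_le_eq)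
  then show ?thesis
    unfolding s_def[symmetric] using s by simp
qed

lemma div_sqrt_le_piecewise:
  fixes a t :: real
  assumes a: "0 < a" "a < 1/2"
  shows "a / sqrt (a\<^sup>2 + t\<^sup>2) \<le> (if \<bar>t\<bar> < 1/4 then (1 + (1/10) * t\<^sup>2 / a\<^sup>2) powr (-1/2) else 1 - 1/10)"
proof (cases "\<bar>t\<bar> < 1/4")
  case True
  define z where "z = 1 + (1/10) * t\<^sup>2 / a\<^sup>2"
  have z: "0 < z" by (simp add: z_def add_pos_nonneg)
  have "sqrt z * a = sqrt (z * a\<^sup>2)"
    using a by (simp add: real_sqrt_mult)
  also have "\<dots> \<le> sqrt (a\<^sup>2 + t\<^sup>2)"
    using a by (intro real_sqrt_le_mono) (simp add: z_def field_simps)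
  finally have "sqrt z * a \<le> sqrt (a\<^sup>2 + t\<^sup>2)" .
  moreover have "0 < sqrt (a\<^sup>2 + t\<^sup>2)"
    using a by (simp add: add_pos_nonneg)
  ultimately have "a / sqrt (a\<^sup>2 + t\<^sup>2) \<le> 1 / sqrt z"
    using z by (simp add: field_simps)
  also have "1 / sqrt z = z powr (-1/2)"
    using z by (simp add: powr_minus_divide powr_half_sqrt[symmetric])
  finally show ?thesis
    using True by (simp add: z_def)
next
  case False
  have "a\<^sup>2 \<le> (1/2)\<^sup>2"
    using a by (intro power_mono) auto
  moreover have "(1/4)\<^sup>2 \<le> t\<^sup>2"
    using False by (metis abs_le_square_iff abs_of_nonneg not_less zero_le_divide_1_iff zero_le_numeral)
  ultimately have "sqrt (100 * a\<^sup>2) \<le> sqrt (81 * (a\<^sup>2 + t\<^sup>2))"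
    by (intro real_sqrt_le_mono) (simp add: power2_eq_square)
  also have "sqrt (81 * (a\<^sup>2 + t\<^sup>2)) = 9 * sqrt (a\<^sup>2 + t\<^sup>2)"
    by (subst real_sqrt_mult) simp
  finally have "10 * a \<le> 9 * sqrt (a\<^sup>2 + t\<^sup>2)"
    using a by (simp add: real_sqrt_mult)
  moreover have "0 < sqrt (a\<^sup>2 + t\<^sup>2)"
    using a by (simp add: add_pos_nonneg)
  ultimately have "a / sqrt (a\<^sup>2 + t\<^sup>2) \<le> 9/10"
    by (simp add: field_simps)
  then show ?thesis
    using False by simp
qed

theorem mainTheorem11:
  shows "\<exists>c::real. c > 0 \<and> (\<forall>\<sigma> t::real. 1/2 < \<sigma> \<and> \<sigma> < 1 \<longrightarrow>
     norm (mellin_f \<sigma> (complex_of_real (1 - \<sigma>) + \<i> * complex_of_real t) / mellin_f \<sigma> (complex_of_real (1 - \<sigma>)))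
       \<le> (if \<bar>t\<bar> < 1/4 then (1 + c * t\<^sup>2 / (1 - \<sigma>)\<^sup>2) powr (-1/2) else 1 - c))"
proof (intro exI[of _ "1/10"] conjI allI impI)
  fix \<sigma> t :: real
  assume "1/2 < \<sigma> \<and> \<sigma> < 1"
  then show "norm (mellin_f \<sigma> (complex_of_real (1 - \<sigma>) + \<i> * complex_of_real t) / mellin_f \<sigma> (complex_of_real (1 - \<sigma>)))
      \<le> (if \<bar>t\<bar> < 1/4 then (1 + 1/10 * t\<^sup>2 / (1 - \<sigma>)\<^sup>2) powr (-1/2) else 1 - 1/10)"
    using order_trans[OF norm_mellin_f_ratio_le div_sqrt_le_piecewise[of "1 - \<sigma>" t]] by simp
qed simp

end
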